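(* Let $X$ be a quasi-lattice and $x,y\in X$. Then $x+y\le\lceil x\rceil+\lceil y\rceil$ and $-(x+y)\le\lceil x\rceil+\lceil y\rceil$; moreover, each of $x-\lceil y\rceil$, $-x-\lceil y\rceil$, $y-\lceil x\rceil$, $-y-\lceil x\rceil$ is $\le\lceil x+y\rceil$ and $\le\lceil x-y\rceil$.
   Context: A pre-ordered Banach space is a real Banach space $X$ with a cone $X_+$ ($X_++X_+\subseteq X_+$, $\lambda X_+\subseteq X_+$ for $\lambda\ge0$); $x\le y$ means $y-x\in X_+$. For $A\subseteq X$, $\upsilon(A)$ is the set of upper bounds of $A$ and $\mu(A)$ the set of minimal upper bounds. Let $\sigma_{x,y}(z)=\|z-x\|+\|z-y\|$. A pre-ordered Banach space with closed cone is a $\upsilon$-quasi-lattice (resp. $\mu$-quasi-lattice) if for all $x,y$ the set $\upsilon(\{x,y\})$ (resp. $\mu(\{x,y\})$) is non-empty and contains a unique minimizer of $\sigma_{x,y}$ over that set, called the quasi-supremum $x\tilde\vee y$. A quasi-lattice is either of these. Define $\lceil x\rceil:=(-x)\tilde\vee x$. *)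

theory Defs
  imports "HOL-Analysis.Analysis"
begin

definition is_cone :: "'a::banach set \<Rightarrow> bool" where
  "is_cone C \<longleftrightarrow> (\<forall>x\<in>C. \<forall>y\<in>C. x + y \<in> C) \<and> (\<forall>x\<in>C. \<forall>l::real. l \<ge> 0 \<longrightarrow> l *\<^sub>R x \<in> C)"

definition cle :: "'a::banach set \<Rightarrow> 'a \<Rightarrow> 'a \<Rightarrow> bool" where
  "cle C x y \<longleftrightarrow> y - x \<in> C"

definition ubs :: "'a::banach set \<Rightarrow> 'a set \<Rightarrow> 'a set" where
  "ubs C A = {z. \<forall>a\<in>A. cle C a z}"

definition mubs :: "'a::banach set \<Rightarrow> 'a set \<Rightarrow> 'a set" where
  "mubs C A = {z \<in> ubs C A. \<forall>w\<in>ubs C A. cle C w z \<longrightarrow> w = z}"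

definition sigma :: "'a::banach \<Rightarrow> 'a \<Rightarrow> 'a \<Rightarrow> real" where
  "sigma x y z = norm (z - x) + norm (z - y)"

text \<open>Quasi-lattice with respect to a choice S of bound-set operator (ubs C or mubs C).\<close>
definition quasi_lattice_wrt :: "'a::banach set \<Rightarrow> ('a set \<Rightarrow> 'a set) \<Rightarrow> bool" where
  "quasi_lattice_wrt C S \<longleftrightarrow> closed C \<and>
     (\<forall>x y. S {x, y} \<noteq> {} \<and>
        (\<exists>!z. z \<in> S {x, y} \<and> (\<forall>w\<in>S {x, y}. sigma x y z \<le> sigma x y w)))"

definition qsup :: "('a::banach set \<Rightarrow> 'a set) \<Rightarrow> 'a \<Rightarrow> 'a \<Rightarrow> 'a" where
  "qsup S x y = (THE z. z \<in> S {x, y} \<and> (\<forall>w\<in>S {x, y}. sigma x y z \<le> sigma x y w))"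

definition qceil :: "('a::banach set \<Rightarrow> 'a set) \<Rightarrow> 'a \<Rightarrow> 'a" where
  "qceil S x = qsup S (- x) x"

end

theory Submission
  imports Defs
begin

text \<open>Every quasi-supremum is an upper bound, and \<open>\<lceil>z\<rceil>\<close> dominates both \<open>z\<close> and \<open>-z\<close>;
  each inequality of the theorem is then the sum of two such bounds, since the cone is
  closed under addition.\<close>

lemma cle_add:
  assumes "is_cone C" and "cle C x y" and "cle C u v"
  shows "cle C (x + u) (y + v)"
proof -
  have "(y - x) + (v - u) \<in> C"
    using assms unfolding is_cone_def cle_def by blast
  then show ?thesis
    unfolding cle_def by (simp add: algebra_simps)
qed

lemma mubs_subset_ubs: "mubs C A \<subseteq> ubs C A"
  unfolding mubs_def by blast

lemma qsup_mem:
  assumes "quasi_lattice_wrt C S"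
  shows "qsup S x y \<in> S {x, y}"
proof -
  have "\<exists>!z. z \<in> S {x, y} \<and> (\<forall>w\<in>S {x, y}. sigma x y z \<le> sigma x y w)"
    using assms unfolding quasi_lattice_wrt_def by blast
  from theI'[OF this] show ?thesis
    unfolding qsup_def by blast
qed

lemma qsup_upper:
  assumes "S = ubs C \<or> S = mubs C" and "quasi_lattice_wrt C S"
  shows "cle C x (qsup S x y)" and "cle C y (qsup S x y)"
proof -
  have "qsup S x y \<in> ubs C {x, y}"
    using qsup_mem[OF assms(2)] assms(1) mubs_subset_ubs by blast
  then show "cle C x (qsup S x y)" and "cle C y (qsup S x y)"
    unfolding ubs_def by auto
qed

lemma qceil_upper:
  assumes "S = ubs C \<or> S = mubs C" and "quasi_lattice_wrt C S"
  shows "cle C z (qceil S z)" and "cle C (- z) (qceil S z)"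
  using qsup_upper[OF assms, where x = "- z" and y = z] unfolding qceil_def by auto

theorem theorem5p11:
  fixes C :: "'a::banach set" and S :: "'a set \<Rightarrow> 'a set" and x y :: 'a
  assumes "is_cone C"
    and "S = ubs C \<or> S = mubs C"
    and "quasi_lattice_wrt C S"
  shows "cle C (x + y) (qceil S x + qceil S y)
    \<and> cle C (- (x + y)) (qceil S x + qceil S y)
    \<and> cle C (x - qceil S y) (qceil S (x + y)) \<and> cle C (x - qceil S y) (qceil S (x - y))
    \<and> cle C (- x - qceil S y) (qceil S (x + y)) \<and> cle C (- x - qceil S y) (qceil S (x - y))
    \<and> cle C (y - qceil S x) (qceil S (x + y)) \<and> cle C (y - qceil S x) (qceil S (x - y))
    \<and> cle C (- y - qceil S x) (qceil S (x + y)) \<and> cle C (- y - qceil S x) (qceil S (x - y))"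
proof -
  note sum = cle_add[OF assms(1)]
  note ceil = qceil_upper[OF assms(2,3)]
  show ?thesis
    using sum[OF ceil(1)[of x] ceil(1)[of y]] sum[OF ceil(2)[of x] ceil(2)[of y]]
      sum[OF ceil(1)[of "x + y"] ceil(2)[of y]] sum[OF ceil(1)[of "x - y"] ceil(1)[of y]]
      sum[OF ceil(2)[of "x + y"] ceil(1)[of y]] sum[OF ceil(2)[of "x - y"] ceil(2)[of y]]
      sum[OF ceil(1)[of "x + y"] ceil(2)[of x]] sum[OF ceil(2)[of "x - y"] ceil(1)[of x]]
      sum[OF ceil(2)[of "x + y"] ceil(1)[of x]] sum[OF ceil(1)[of "x - y"] ceil(2)[of x]]
    unfolding cle_def by (simp add: algebra_simps)
qed

end
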